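(* Let $G$ be a multi-player game with arena $(\Pi,V,(V_i)_{i\in\Pi},E)$, payoff functions $f_i:Plays\to P_i$ and strict total orders $\prec_i$ on $P_i$. Assume that for every $i\in\Pi$: (a) for all plays $h\rho,h\rho'$ with $h$ a history, $f_i(\rho)\preceq_i f_i(\rho')$ implies $f_i(h\rho)\preceq_i f_i(h\rho')$; and (b) the two-player zero-sum game $G_i$ has uniform optimal strategies for both players. Then for every $v_0\in V$ there exists a finite-memory Nash equilibrium in $(G,v_0)$.
   Context: An arena is $(\Pi,V,(V_i)_{i\in\Pi},E)$ with $\Pi$ a finite set of players, $V$ a finite set of vertices, $E\subseteq V\times V$ such that every vertex has an outgoing edge, and $(V_i)_{i\in\Pi}$ a partition of $V$ ($V_i$ controlled by player $i$). Plays are infinite paths, histories nonempty finite paths; $Plays(v_0)$, $Hist_i(v_0)$ denote plays from $v_0$ and histories from $v_0$ ending in $V_i$. Each player $i$ has a payoff function $f_i:Plays\to P_i$ and a strict total order $\prec_i$ on $P_i$; $p\preceq_i p'$ means $p\prec_i p'$ or $p=p'$. A strategy of player $i$ from $v_0$ maps each $hv\in Hist_i(v_0)$ to a successor of $v$. It is positional if it depends only on the last vertex, uniform if it is a positional strategy given by a map $v\mapsto\sigma(v)$ on all of $V_i$ (hence usable from every initial vertex), and finite-memory if it can be computed by a finite-state machine reading the history (finitely many memory states, a memory update on each vertex, and the next vertex determined by the current memory state and current vertex). A profile is finite-memory if all its strategies are. The outcome $\langle(\sigma_i)_{i\in\Pi}\rangle_{v_0}$ is the unique play from $v_0$ consistent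 with all strategies. A profile is a Nash equilibrium in $(G,v_0)$ if no player $i$ has a strategy $\sigma'_i$ with $f_i(\langle(\sigma_j)_j\rangle_{v_0})\prec_i f_i(\langle\sigma'_i,\sigma_{-i}\rangle_{v_0})$. The game $G_i$ is the two-player zero-sum game on the same arena where player $i$ (controlling $V_i$, using $f_i$ and $\prec_i$) plays against player $-i$, the coalition of the others (controlling $V\setminus V_i$). Optimal strategies from $v$: a strategy $\tau$ of player $i$ and $\tau'$ of player $-i$ and an element ${val}_i(v)$ such that ${val}_i(v)\preceq_i f_i(\rho)$ for all plays from $v$ consistent with $\tau$ and $f_i(\rho)\preceq_i{val}_i(v)$ for all plays from $v$ consistent with $\tau'$. "$G_i$ has uniform optimal strategies for both players" means there are uniform strategies of player $i$ and of player $-i$ that are optimal from every initial vertex $v\in V$. *)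

theory Defs
  imports Main
begin

text \<open>Arena: players Pi, vertices V, edges E, and an owner map (vertex v belongs to V_i iff owner v = i).
  Plays are infinite paths (nat \<Rightarrow> 'v), histories are nonempty finite paths (lists).\<close>

definition arena :: "'p set \<Rightarrow> 'v set \<Rightarrow> ('v \<Rightarrow> 'p) \<Rightarrow> ('v \<times> 'v) set \<Rightarrow> bool" where
  "arena Pi V owner E \<longleftrightarrow> finite Pi \<and> finite V \<and> E \<subseteq> V \<times> V
     \<and> (\<forall>v\<in>V. owner v \<in> Pi) \<and> (\<forall>v\<in>V. \<exists>w. (v, w) \<in> E)"

definition is_play :: "'v set \<Rightarrow> ('v \<times> 'v) set \<Rightarrow> (nat \<Rightarrow> 'v) \<Rightarrow> bool" where
  "is_play V E \<rho> \<longleftrightarrow> (\<forall>n. \<rho> n \<in> V) \<and> (\<forall>n. (\<rho> n, \<rho> (Suc n)) \<in> E)"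

definition plays_from :: "'v set \<Rightarrow> ('v \<times> 'v) set \<Rightarrow> 'v \<Rightarrow> (nat \<Rightarrow> 'v) set" where
  "plays_from V E v = {\<rho>. is_play V E \<rho> \<and> \<rho> 0 = v}"

definition is_hist :: "'v set \<Rightarrow> ('v \<times> 'v) set \<Rightarrow> 'v list \<Rightarrow> bool" where
  "is_hist V E h \<longleftrightarrow> h \<noteq> [] \<and> set h \<subseteq> V \<and> (\<forall>k. Suc k < length h \<longrightarrow> (h ! k, h ! Suc k) \<in> E)"

definition hist_i :: "'v set \<Rightarrow> ('v \<times> 'v) set \<Rightarrow> ('v \<Rightarrow> 'p) \<Rightarrow> 'p \<Rightarrow> 'v \<Rightarrow> 'v list set" where
  "hist_i V E owner i v0 = {h. is_hist V E h \<and> hd h = v0 \<and> owner (last h) = i}"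

definition conc :: "'v list \<Rightarrow> (nat \<Rightarrow> 'v) \<Rightarrow> (nat \<Rightarrow> 'v)" where
  "conc h \<rho> = (\<lambda>n. if n < length h then h ! n else \<rho> (n - length h))"

definition strict_total_on :: "'o set \<Rightarrow> ('o \<times> 'o) set \<Rightarrow> bool" where
  "strict_total_on P r \<longleftrightarrow> r \<subseteq> P \<times> P \<and> (\<forall>x. (x, x) \<notin> r) \<and> trans r
     \<and> (\<forall>x\<in>P. \<forall>y\<in>P. x \<noteq> y \<longrightarrow> (x, y) \<in> r \<or> (y, x) \<in> r)"

definition le_of :: "('o \<times> 'o) set \<Rightarrow> 'o \<Rightarrow> 'o \<Rightarrow> bool" where
  "le_of r p p' \<longleftrightarrow> (p, p') \<in> r \<or> p = p'"

definition is_strategy :: "'v set \<Rightarrow> ('v \<times> 'v) set \<Rightarrow> ('v \<Rightarrow> 'p) \<Rightarrow> 'p \<Rightarrow> 'v \<Rightarrow> ('v list \<Rightarrow> 'v) \<Rightarrow> bool" where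
  "is_strategy V E owner i v0 \<sigma> \<longleftrightarrow> (\<forall>h\<in>hist_i V E owner i v0. (last h, \<sigma> h) \<in> E)"

text \<open>Finite-memory strategy: a Mealy machine with finitely many memory states M (encoded as naturals),
  initial state m0, update function upd (applied to each vertex read) and next-move function nxt
  (given current memory state and current vertex).\<close>
definition finite_memory :: "'v set \<Rightarrow> ('v \<times> 'v) set \<Rightarrow> ('v \<Rightarrow> 'p) \<Rightarrow> 'p \<Rightarrow> 'v \<Rightarrow> ('v list \<Rightarrow> 'v) \<Rightarrow> bool" where
  "finite_memory V E owner i v0 \<sigma> \<longleftrightarrow>
     (\<exists>(M :: nat set) m0 upd nxt. finite M \<and> m0 \<in> M \<and> (\<forall>m\<in>M. \<forall>v\<in>V. upd m v \<in> M)
        \<and> (\<forall>h\<in>hist_i V E owner i v0. \<sigma> h = nxt (foldl upd m0 (butlast h)) (last h)))"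

fun out_hist :: "('v \<Rightarrow> 'p) \<Rightarrow> ('p \<Rightarrow> 'v list \<Rightarrow> 'v) \<Rightarrow> 'v \<Rightarrow> nat \<Rightarrow> 'v list" where
  "out_hist owner \<sigma> v0 0 = [v0]"
| "out_hist owner \<sigma> v0 (Suc n) =
     (let h = out_hist owner \<sigma> v0 n in h @ [\<sigma> (owner (last h)) h])"

definition outcome :: "('v \<Rightarrow> 'p) \<Rightarrow> ('p \<Rightarrow> 'v list \<Rightarrow> 'v) \<Rightarrow> 'v \<Rightarrow> (nat \<Rightarrow> 'v)" where
  "outcome owner \<sigma> v0 = (\<lambda>n. last (out_hist owner \<sigma> v0 n))"

definition nash_eq :: "'p set \<Rightarrow> 'v set \<Rightarrow> ('v \<Rightarrow> 'p) \<Rightarrow> ('v \<times> 'v) set \<Rightarrow> ('p \<Rightarrow> (nat \<Rightarrow> 'v) \<Rightarrow> 'o)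
     \<Rightarrow> ('p \<Rightarrow> ('o \<times> 'o) set) \<Rightarrow> 'v \<Rightarrow> ('p \<Rightarrow> 'v list \<Rightarrow> 'v) \<Rightarrow> bool" where
  "nash_eq Pi V owner E f lt v0 \<sigma> \<longleftrightarrow>
     (\<forall>i\<in>Pi. is_strategy V E owner i v0 (\<sigma> i)) \<and>
     (\<forall>i\<in>Pi. \<forall>\<sigma>'. is_strategy V E owner i v0 \<sigma>' \<longrightarrow>
        (f i (outcome owner \<sigma> v0), f i (outcome owner (\<sigma>(i := \<sigma>')) v0)) \<notin> lt i)"

definition consistent_pos :: "('v \<Rightarrow> bool) \<Rightarrow> ('v \<Rightarrow> 'v) \<Rightarrow> (nat \<Rightarrow> 'v) \<Rightarrow> bool" where
  "consistent_pos owns \<tau> \<rho> \<longleftrightarrow> (\<forall>n. owns (\<rho> n) \<longrightarrow> \<rho> (Suc n) = \<tau> (\<rho> n))"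

definition uniform_optimal :: "'v set \<Rightarrow> ('v \<Rightarrow> 'p) \<Rightarrow> ('v \<times> 'v) set \<Rightarrow> ('p \<Rightarrow> (nat \<Rightarrow> 'v) \<Rightarrow> 'o)
     \<Rightarrow> ('p \<Rightarrow> 'o set) \<Rightarrow> ('p \<Rightarrow> ('o \<times> 'o) set) \<Rightarrow> 'p \<Rightarrow> bool" where
  "uniform_optimal V owner E f P lt i \<longleftrightarrow>
     (\<exists>\<tau> \<tau>' val.
        (\<forall>v\<in>V. owner v = i \<longrightarrow> (v, \<tau> v) \<in> E) \<and>
        (\<forall>v\<in>V. owner v \<noteq> i \<longrightarrow> (v, \<tau>' v) \<in> E) \<and>
        (\<forall>v\<in>V. val v \<in> P i
           \<and> (\<forall>\<rho>\<in>plays_from V E v. consistent_pos (\<lambda>w. owner w = i) \<tau> \<rho> \<longrightarrow> le_of (lt i) (val v) (f i \<rho>))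
           \<and> (\<forall>\<rho>\<in>plays_from V E v. consistent_pos (\<lambda>w. owner w \<noteq> i) \<tau>' \<rho> \<longrightarrow> le_of (lt i) (f i \<rho>) (val v))))"

end

theory Submission
  imports Defs
begin

text \<open>Let every player i follow the uniform optimal strategy \<open>\<tau>\<^sub>i\<close> of \<open>G\<^sub>i\<close>, and let
  the first player i who leaves this play be punished forever by the coalition's optimal
  strategy \<open>\<tau>'\<^sub>i\<close>. If i deviates right after vertex v, the new continuation from v is
  consistent with \<open>\<tau>'\<^sub>i\<close> and so worth at most \<open>val\<^sub>i(v)\<close> to i, while the old one is
  consistent with \<open>\<tau>\<^sub>i\<close> and worth at least \<open>val\<^sub>i(v)\<close>; hypothesis (a) carries this
  comparison over to the whole plays, which share the prefix up to v. Implementing the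
  profile only requires remembering the previous vertex and the deviator, a finite memory.\<close>

lemma le_of_trans: "trans r \<Longrightarrow> le_of r a b \<Longrightarrow> le_of r b c \<Longrightarrow> le_of r a c"
  unfolding le_of_def by (meson transD)

lemma le_of_imp_not_less: "trans r \<Longrightarrow> irrefl r \<Longrightarrow> le_of r a b \<Longrightarrow> (b, a) \<notin> r"
  unfolding le_of_def irrefl_def by (meson transD)

lemma finite_memoryI:
  fixes M :: "'s set"
  assumes "finite M" "m0 \<in> M" "\<forall>m\<in>M. \<forall>v\<in>V. upd m v \<in> M"
    and "\<forall>h\<in>hist_i V E owner i v0. \<sigma> h = nxt (foldl upd m0 (butlast h)) (last h)"
  shows "finite_memory V E owner i v0 \<sigma>"
proof -
  obtain enc :: "'s \<Rightarrow> nat" where enc: "inj_on enc M"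
    using finite_imp_inj_to_nat_seg[OF assms(1)] by blast
  define dec where "dec = inv_into M enc"
  have dec: "dec (enc m) = m" if "m \<in> M" for m
    using enc that by (simp add: dec_def)
  define upd' where "upd' m v = enc (upd (dec m) v)" for m v
  have foldl_enc: "foldl upd' (enc m) xs = enc (foldl upd m xs) \<and> foldl upd m xs \<in> M"
    if "m \<in> M" "set xs \<subseteq> V" for m xs
    using that
  proof (induction xs arbitrary: m)
    case (Cons x xs)
    then show ?case using assms(3) by (simp add: upd'_def dec)
  qed simp
  show ?thesis unfolding finite_memory_def
  proof (intro exI[of _ "enc ` M"] exI[of _ "enc m0"] exI[of _ upd'] exI[of _ "\<lambda>m. nxt (dec m)"] conjI ballI)
    show "finite (enc ` M)" "enc m0 \<in> enc ` M" using assms(1,2) by simp_all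
    show "upd' m v \<in> enc ` M" if "m \<in> enc ` M" "v \<in> V" for m v
      using that assms(3) dec by (auto simp: upd'_def)
  next
    fix h assume h: "h \<in> hist_i V E owner i v0"
    then have "set (butlast h) \<subseteq> V"
      by (auto simp: hist_i_def is_hist_def dest: in_set_butlastD)
    then have "foldl upd' (enc m0) (butlast h) = enc (foldl upd m0 (butlast h))"
      and "foldl upd m0 (butlast h) \<in> M"
      using foldl_enc assms(2) by blast+
    then show "\<sigma> h = nxt (dec (foldl upd' (enc m0) (butlast h))) (last h)"
      using assms(4) h dec by simp
  qed
qed

lemma last_map_upt_Suc: "last (map \<rho> [0..<Suc n]) = \<rho> n"
  by simp

lemma outcome_0 [simp]: "outcome owner \<sigma> v0 0 = v0"
  by (simp add: outcome_def)

lemma out_hist_eq_map: "out_hist owner \<sigma> v0 n = map (outcome owner \<sigma> v0) [0..<Suc n]"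
proof (induction n)
  case (Suc n)
  have "out_hist owner \<sigma> v0 (Suc n) = out_hist owner \<sigma> v0 n @ [outcome owner \<sigma> v0 (Suc n)]"
    by (simp add: outcome_def Let_def)
  with Suc.IH show ?case by simp
qed simp

lemma outcome_Suc:
  "outcome owner \<sigma> v0 (Suc n) =
     \<sigma> (owner (outcome owner \<sigma> v0 n)) (map (outcome owner \<sigma> v0) [0..<Suc n])"
proof -
  have "outcome owner \<sigma> v0 (Suc n) = \<sigma> (owner (last (out_hist owner \<sigma> v0 n))) (out_hist owner \<sigma> v0 n)"
    by (simp add: outcome_def Let_def)
  then show ?thesis by (simp only: out_hist_eq_map last_map_upt_Suc)
qed

lemma is_hist_map_upt:
  "(\<forall>k\<le>n. \<rho> k \<in> V) \<Longrightarrow> (\<forall>k<n. (\<rho> k, \<rho> (Suc k)) \<in> E) \<Longrightarrow> is_hist V E (map \<rho> [0..<Suc n])"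
  unfolding is_hist_def by (auto simp: nth_append less_Suc_eq_le simp del: upt_Suc)

lemma outcome_is_play:
  assumes ar: "arena Pi V owner E" and strat: "\<forall>j\<in>Pi. is_strategy V E owner j v0 (\<sigma> j)"
    and v0: "v0 \<in> V"
  shows "is_play V E (outcome owner \<sigma> v0)"
proof -
  let ?\<rho> = "outcome owner \<sigma> v0"
  have "(\<forall>k\<le>n. ?\<rho> k \<in> V) \<and> (\<forall>k<n. (?\<rho> k, ?\<rho> (Suc k)) \<in> E)" for n
  proof (induction n)
    case (Suc n)
    let ?h = "map ?\<rho> [0..<Suc n]"
    have "is_hist V E ?h" using Suc by (intro is_hist_map_upt) auto
    then have "?h \<in> hist_i V E owner (owner (?\<rho> n)) v0"
      by (simp add: hist_i_def hd_map last_map_upt_Suc del: upt_Suc)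
    moreover have "owner (?\<rho> n) \<in> Pi" using Suc ar by (simp add: arena_def)
    ultimately have "(last ?h, \<sigma> (owner (?\<rho> n)) ?h) \<in> E"
      using strat unfolding is_strategy_def by blast
    then have edge: "(?\<rho> n, ?\<rho> (Suc n)) \<in> E"
      by (simp only: outcome_Suc last_map_upt_Suc)
    then have "?\<rho> (Suc n) \<in> V" using ar by (auto simp: arena_def)
    then show ?case using Suc edge by (auto simp: le_Suc_eq less_Suc_eq)
  qed (simp add: v0)
  then show ?thesis unfolding is_play_def by blast
qed

lemma conc_prefix_suffix: "conc (map \<rho> [0..<m]) (\<lambda>n. \<rho> (n + m)) = \<rho>"
  by (rule ext) (simp add: conc_def)

lemma le_of_from_suffixes:
  assumes mono: "\<And>h \<rho> \<rho>'. is_hist V E h \<Longrightarrow> is_play V E (conc h \<rho>) \<Longrightarrow> is_play V E (conc h \<rho>') \<Longrightarrow>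
              le_of r (g \<rho>) (g \<rho>') \<Longrightarrow> le_of r (g (conc h \<rho>)) (g (conc h \<rho>'))"
    and plays: "is_play V E \<pi>" "is_play V E \<rho>" and prefix: "\<forall>n<m. \<pi> n = \<rho> n"
    and suffix: "le_of r (g (\<lambda>n. \<pi> (n + m))) (g (\<lambda>n. \<rho> (n + m)))"
  shows "le_of r (g \<pi>) (g \<rho>)"
proof (cases m)
  case 0
  then show ?thesis using suffix by simp
next
  case (Suc m')
  have "map \<pi> [0..<m] = map \<rho> [0..<m]" using prefix by simp
  then have "conc (map \<rho> [0..<m]) (\<lambda>n. \<pi> (n + m)) = \<pi>"
    using conc_prefix_suffix[of \<pi> m] by metis
  moreover have "is_hist V E (map \<rho> [0..<m])"
    using plays(2) by (simp add: Suc is_hist_map_upt is_play_def del: upt_Suc)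
  ultimately show ?thesis
    using mono[OF _ _ _ suffix, of "map \<rho> [0..<m]"] plays by (simp add: conc_prefix_suffix)
qed

text \<open>Memory state: the vertex read last, and the first player (if any) whose move
  departed from their \<open>\<tau>\<close>.\<close>

definition punish_upd :: "('p \<Rightarrow> 'v \<Rightarrow> 'v) \<Rightarrow> ('v \<Rightarrow> 'p) \<Rightarrow> 'v option \<times> 'p option \<Rightarrow> 'v \<Rightarrow> 'v option \<times> 'p option" where
  "punish_upd tau owner s v = (Some v, case s of
     (Some w, None) \<Rightarrow> if v = tau (owner w) w then None else Some (owner w)
   | (_, d) \<Rightarrow> d)"

definition deviator :: "('p \<Rightarrow> 'v \<Rightarrow> 'v) \<Rightarrow> ('v \<Rightarrow> 'p) \<Rightarrow> 'v list \<Rightarrow> 'p option" where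
  "deviator tau owner h = snd (foldl (punish_upd tau owner) (None, None) h)"

definition punish_move :: "('p \<Rightarrow> 'v \<Rightarrow> 'v) \<Rightarrow> ('p \<Rightarrow> 'v \<Rightarrow> 'v) \<Rightarrow> 'p \<Rightarrow> 'p option \<Rightarrow> 'v \<Rightarrow> 'v" where
  "punish_move tau tau' j d v = (case d of Some k \<Rightarrow> if k = j then tau j v else tau' k v | None \<Rightarrow> tau j v)"

definition punish_profile :: "('p \<Rightarrow> 'v \<Rightarrow> 'v) \<Rightarrow> ('p \<Rightarrow> 'v \<Rightarrow> 'v) \<Rightarrow> ('v \<Rightarrow> 'p) \<Rightarrow> 'p \<Rightarrow> 'v list \<Rightarrow> 'v" where
  "punish_profile tau tau' owner j h = punish_move tau tau' j (deviator tau owner h) (last h)"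

lemma fst_foldl_punish_upd: "xs \<noteq> [] \<Longrightarrow> fst (foldl (punish_upd tau owner) s xs) = Some (last xs)"
  by (cases xs rule: rev_exhaust) (simp_all add: punish_upd_def)

lemma deviator_Nil [simp]: "deviator tau owner [] = None"
  by (simp add: deviator_def)

lemma deviator_singleton [simp]: "deviator tau owner [v] = None"
  by (simp add: deviator_def punish_upd_def)

lemma deviator_snoc:
  assumes "xs \<noteq> []"
  shows "deviator tau owner (xs @ [x]) = (case deviator tau owner xs of
     None \<Rightarrow> if x = tau (owner (last xs)) (last xs) then None else Some (owner (last xs))
   | Some j \<Rightarrow> Some j)"
proof -
  obtain d where "foldl (punish_upd tau owner) (None, None) xs = (Some (last xs), d)"
    using fst_foldl_punish_upd[OF assms] by (metis prod.collapse)
  then show ?thesis by (simp add: deviator_def punish_upd_def)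
qed

lemma deviator_in_owners: "deviator tau owner h = Some j \<Longrightarrow> j \<in> owner ` set h"
proof (induction h rule: rev_induct)
  case (snoc x xs)
  then show ?case
    by (cases "xs = []") (auto simp: deviator_snoc split: option.splits if_splits)
qed simp

lemma deviator_append: "deviator tau owner xs = Some j \<Longrightarrow> deviator tau owner (xs @ ys) = Some j"
proof (induction ys rule: rev_induct)
  case (snoc y ys)
  then have "xs @ ys \<noteq> []" by auto
  with snoc show ?case by (simp add: deviator_snoc flip: append_assoc)
qed simp

lemma punish_profile_is_strategy:
  assumes owners: "\<forall>v\<in>V. owner v \<in> Pi"
    and tau: "\<forall>i\<in>Pi. \<forall>v\<in>V. owner v = i \<longrightarrow> (v, tau i v) \<in> E"
    and tau': "\<forall>i\<in>Pi. \<forall>v\<in>V. owner v \<noteq> i \<longrightarrow> (v, tau' i v) \<in> E"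
    and j: "j \<in> Pi"
  shows "is_strategy V E owner j v0 (punish_profile tau tau' owner j)"
  unfolding is_strategy_def
proof
  fix h assume h: "h \<in> hist_i V E owner j v0"
  then have last: "last h \<in> V" "owner (last h) = j" and "set h \<subseteq> V"
    by (auto simp: hist_i_def is_hist_def)
  then have "k \<in> Pi" if "deviator tau owner h = Some k" for k
    using deviator_in_owners[OF that] owners by blast
  then show "(last h, punish_profile tau tau' owner j h) \<in> E"
    using tau tau' j last
    by (auto simp: punish_profile_def punish_move_def split: option.split)
qed

lemma punish_profile_finite_memory:
  assumes "finite V"
  shows "finite_memory V E owner j v0 (punish_profile tau tau' owner j)"
proof (rule finite_memoryI)
  let ?M = "insert None (Some ` V) \<times> insert None (Some ` owner ` V)"
  show "finite ?M" "(None, None) \<in> ?M" using assms by simp_all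
  show "\<forall>s\<in>?M. \<forall>v\<in>V. punish_upd tau owner s v \<in> ?M"
    by (auto simp: punish_upd_def split: if_split_asm)
  show "\<forall>h\<in>hist_i V E owner j v0. punish_profile tau tau' owner j h =
     (\<lambda>s v. punish_move tau tau' j (snd (punish_upd tau owner s v)) v)
       (foldl (punish_upd tau owner) (None, None) (butlast h)) (last h)"
  proof
    fix h assume "h \<in> hist_i V E owner j v0"
    then have "h = butlast h @ [last h]" by (simp add: hist_i_def is_hist_def)
    then show "punish_profile tau tau' owner j h = (\<lambda>s v. punish_move tau tau' j (snd (punish_upd tau owner s v)) v)
       (foldl (punish_upd tau owner) (None, None) (butlast h)) (last h)"
      unfolding punish_profile_def deviator_def by (metis foldl_Cons foldl_Nil foldl_append)
  qed
qed

lemma outcome_Suc_punish_move: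
  assumes "\<sigma> (owner (outcome owner \<sigma> v0 n)) = punish_profile tau tau' owner (owner (outcome owner \<sigma> v0 n))"
  shows "outcome owner \<sigma> v0 (Suc n) = punish_move tau tau' (owner (outcome owner \<sigma> v0 n))
     (deviator tau owner (map (outcome owner \<sigma> v0) [0..<Suc n])) (outcome owner \<sigma> v0 n)"
  using assms by (simp only: outcome_Suc punish_profile_def last_map_upt_Suc)

lemma punish_outcome_follows_tau:
  fixes tau tau' :: "'p \<Rightarrow> 'v \<Rightarrow> 'v" and owner :: "'v \<Rightarrow> 'p" and v0 :: 'v
  defines "\<rho> \<equiv> outcome owner (punish_profile tau tau' owner) v0"
  shows "deviator tau owner (map \<rho> [0..<Suc n]) = None \<and> \<rho> (Suc n) = tau (owner (\<rho> n)) (\<rho> n)"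
proof (induction n)
  case 0
  then show ?case
    using outcome_Suc_punish_move[of "punish_profile tau tau' owner" owner v0 0 tau tau']
    by (simp add: \<rho>_def punish_move_def)
next
  case (Suc n)
  have "map \<rho> [0..<Suc (Suc n)] = map \<rho> [0..<Suc n] @ [\<rho> (Suc n)]" by simp
  then have "deviator tau owner (map \<rho> [0..<Suc (Suc n)]) = None"
    using Suc by (simp add: deviator_snoc last_map_upt_Suc del: upt_Suc)
  then show ?case
    using outcome_Suc_punish_move[of "punish_profile tau tau' owner" owner v0 "Suc n" tau tau']
    by (simp add: \<rho>_def punish_move_def last_map_upt_Suc del: upt_Suc)
qed

lemma punish_outcome_consistent_tau:
  "consistent_pos (\<lambda>w. owner w = i) (tau i) (\<lambda>n. outcome owner (punish_profile tau tau' owner) v0 (n + m))"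
  unfolding consistent_pos_def by (simp add: punish_outcome_follows_tau del: upt_Suc)

lemma outcome_fun_upd_divergence:
  fixes owner :: "'v \<Rightarrow> 'p" and \<sigma> :: "'p \<Rightarrow> 'v list \<Rightarrow> 'v"
    and i :: 'p and \<sigma>' :: "'v list \<Rightarrow> 'v" and v0 :: 'v
  defines "\<rho> \<equiv> outcome owner \<sigma> v0" and "\<pi> \<equiv> outcome owner (\<sigma>(i := \<sigma>')) v0"
  assumes "\<pi> \<noteq> \<rho>"
  obtains m where "\<forall>n\<le>m. \<pi> n = \<rho> n" "owner (\<rho> m) = i" "\<pi> (Suc m) \<noteq> \<rho> (Suc m)"
proof -
  define k where "k = (LEAST n. \<pi> n \<noteq> \<rho> n)"
  have "\<exists>n. \<pi> n \<noteq> \<rho> n" using assms(3) by (simp add: fun_eq_iff)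
  then have k: "\<pi> k \<noteq> \<rho> k" unfolding k_def by (rule LeastI_ex)
  have before_k: "\<pi> n = \<rho> n" if "n < k" for n
    using not_less_Least[OF that[unfolded k_def]] by blast
  have "\<pi> 0 = \<rho> 0" by (simp add: \<pi>_def \<rho>_def)
  with k have "k \<noteq> 0" by metis
  then obtain m where km: "k = Suc m" using not0_implies_Suc by blast
  have agree: "\<forall>n\<le>m. \<pi> n = \<rho> n" using before_k km by simp
  then have prefix: "map \<pi> [0..<Suc m] = map \<rho> [0..<Suc m]" by (simp del: upt_Suc)
  have "owner (\<rho> m) = i"
  proof (rule ccontr)
    assume "owner (\<rho> m) \<noteq> i"
    have "\<pi> (Suc m) = (\<sigma>(i := \<sigma>')) (owner (\<pi> m)) (map \<pi> [0..<Suc m])"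
      unfolding \<pi>_def by (rule outcome_Suc)
    also have "\<dots> = \<sigma> (owner (\<rho> m)) (map \<rho> [0..<Suc m])"
      unfolding prefix using agree \<open>owner (\<rho> m) \<noteq> i\<close> by simp
    also have "\<dots> = \<rho> (Suc m)"
      unfolding \<rho>_def by (rule outcome_Suc[symmetric])
    finally show False using k km by simp
  qed
  with agree k km show thesis by (intro that) simp_all
qed

lemma punish_deviation:
  fixes tau tau' :: "'p \<Rightarrow> 'v \<Rightarrow> 'v" and owner :: "'v \<Rightarrow> 'p" and v0 :: 'v
    and i :: 'p and \<sigma>' :: "'v list \<Rightarrow> 'v"
  defines "\<sigma> \<equiv> punish_profile tau tau' owner"
  defines "\<rho> \<equiv> outcome owner \<sigma> v0" and "\<pi> \<equiv> outcome owner (\<sigma>(i := \<sigma>')) v0"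
  assumes "\<pi> \<noteq> \<rho>"
  obtains m where "\<forall>n\<le>m. \<pi> n = \<rho> n" "owner (\<rho> m) = i"
    "consistent_pos (\<lambda>w. owner w \<noteq> i) (tau' i) (\<lambda>n. \<pi> (n + m))"
proof -
  obtain m where agree: "\<forall>n\<le>m. \<pi> n = \<rho> n" and owner_m: "owner (\<rho> m) = i"
    and diverge: "\<pi> (Suc m) \<noteq> \<rho> (Suc m)"
    using assms(4) unfolding \<pi>_def \<rho>_def by (rule outcome_fun_upd_divergence)
  have "map \<pi> [0..<Suc (Suc m)] = map \<rho> [0..<Suc m] @ [\<pi> (Suc m)]"
    using agree by simp
  then have "deviator tau owner (map \<pi> [0..<Suc (Suc m)]) = Some i"
    using diverge owner_m
    by (simp add: deviator_snoc last_map_upt_Suc punish_outcome_follows_tau \<rho>_def \<sigma>_def del: upt_Suc)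
  then have deviated: "deviator tau owner (map \<pi> [0..<Suc (Suc m) + k]) = Some i" for k
    unfolding upt_add_eq_append[OF le0] map_append by (rule deviator_append)
  have "consistent_pos (\<lambda>w. owner w \<noteq> i) (tau' i) (\<lambda>n. \<pi> (n + m))"
    unfolding consistent_pos_def
  proof (intro allI impI)
    fix n assume not_i: "owner (\<pi> (n + m)) \<noteq> i"
    then obtain n' where n: "n = Suc n'" using agree owner_m by (cases n) auto
    have "\<pi> (Suc (n + m)) = punish_move tau tau' (owner (\<pi> (n + m)))
        (deviator tau owner (map \<pi> [0..<Suc (n + m)])) (\<pi> (n + m))"
      unfolding \<pi>_def using not_i by (intro outcome_Suc_punish_move) (simp add: \<sigma>_def \<pi>_def)
    moreover have "Suc (n + m) = Suc (Suc m) + n'" using n by simp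
    ultimately show "\<pi> (Suc n + m) = tau' i (\<pi> (n + m))"
      using deviated[of n'] not_i by (simp add: punish_move_def add.commute del: upt_Suc)
  qed
  with agree owner_m show thesis by (rule that)
qed

lemma punish_profile_nash_eq:
  assumes ar: "arena Pi V owner E"
    and order: "\<And>i. i \<in> Pi \<Longrightarrow> irrefl (lt i) \<and> trans (lt i)"
    and mono: "\<And>i h \<rho> \<rho>'. i \<in> Pi \<Longrightarrow> is_hist V E h \<Longrightarrow>
              is_play V E (conc h \<rho>) \<Longrightarrow> is_play V E (conc h \<rho>') \<Longrightarrow>
              le_of (lt i) (f i \<rho>) (f i \<rho>') \<Longrightarrow> le_of (lt i) (f i (conc h \<rho>)) (f i (conc h \<rho>'))"
    and tau: "\<forall>i\<in>Pi. \<forall>v\<in>V. owner v = i \<longrightarrow> (v, tau i v) \<in> E"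
    and tau': "\<forall>i\<in>Pi. \<forall>v\<in>V. owner v \<noteq> i \<longrightarrow> (v, tau' i v) \<in> E"
    and opt_tau: "\<forall>i\<in>Pi. \<forall>v\<in>V. \<forall>\<rho>\<in>plays_from V E v.
       consistent_pos (\<lambda>w. owner w = i) (tau i) \<rho> \<longrightarrow> le_of (lt i) (val i v) (f i \<rho>)"
    and opt_tau': "\<forall>i\<in>Pi. \<forall>v\<in>V. \<forall>\<rho>\<in>plays_from V E v.
       consistent_pos (\<lambda>w. owner w \<noteq> i) (tau' i) \<rho> \<longrightarrow> le_of (lt i) (f i \<rho>) (val i v)"
    and v0: "v0 \<in> V"
  shows "nash_eq Pi V owner E f lt v0 (punish_profile tau tau' owner)"
proof -
  define \<sigma> where "\<sigma> = punish_profile tau tau' owner"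
  have owners: "\<forall>v\<in>V. owner v \<in> Pi" using ar by (simp add: arena_def)
  have strat: "\<forall>j\<in>Pi. is_strategy V E owner j v0 (\<sigma> j)"
    using punish_profile_is_strategy[OF owners tau tau'] by (simp add: \<sigma>_def)
  have no_gain: "(f i (outcome owner \<sigma> v0), f i (outcome owner (\<sigma>(i := \<sigma>')) v0)) \<notin> lt i"
    if i: "i \<in> Pi" and \<sigma>': "is_strategy V E owner i v0 \<sigma>'" for i \<sigma>'
  proof -
    define \<rho> where "\<rho> = outcome owner \<sigma> v0"
    define \<pi> where "\<pi> = outcome owner (\<sigma>(i := \<sigma>')) v0"
    have "\<forall>j\<in>Pi. is_strategy V E owner j v0 ((\<sigma>(i := \<sigma>')) j)" using strat \<sigma>' by simp
    then have plays: "is_play V E \<pi>" "is_play V E \<rho>"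
      unfolding \<pi>_def \<rho>_def using outcome_is_play[OF ar _ v0] strat by blast+
    have "le_of (lt i) (f i \<pi>) (f i \<rho>)"
    proof (cases "\<pi> = \<rho>")
      case False
      then obtain m where agree: "\<forall>n\<le>m. \<pi> n = \<rho> n" and "owner (\<rho> m) = i"
        and punished: "consistent_pos (\<lambda>w. owner w \<noteq> i) (tau' i) (\<lambda>n. \<pi> (n + m))"
        unfolding \<pi>_def \<rho>_def \<sigma>_def by (rule punish_deviation)
      have "\<rho> m \<in> V" using plays by (simp add: is_play_def)
      have "(\<lambda>n. \<pi> (n + m)) \<in> plays_from V E (\<rho> m)" "(\<lambda>n. \<rho> (n + m)) \<in> plays_from V E (\<rho> m)"
        using plays agree by (simp_all add: plays_from_def is_play_def)
      moreover have "consistent_pos (\<lambda>w. owner w = i) (tau i) (\<lambda>n. \<rho> (n + m))"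
        unfolding \<rho>_def \<sigma>_def by (rule punish_outcome_consistent_tau)
      ultimately have "le_of (lt i) (f i (\<lambda>n. \<pi> (n + m))) (val i (\<rho> m))"
        and "le_of (lt i) (val i (\<rho> m)) (f i (\<lambda>n. \<rho> (n + m)))"
        using opt_tau'[rule_format, OF i \<open>\<rho> m \<in> V\<close> _ punished]
          opt_tau[rule_format, OF i \<open>\<rho> m \<in> V\<close>] by auto
      then have "le_of (lt i) (f i (\<lambda>n. \<pi> (n + m))) (f i (\<lambda>n. \<rho> (n + m)))"
        using order[OF i] by (blast intro: le_of_trans)
      moreover have "\<forall>n<m. \<pi> n = \<rho> n" using agree by simp
      ultimately show ?thesis
        using le_of_from_suffixes[where g = "f i", OF mono[OF i] plays] by blast
    qed (simp add: le_of_def)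
    then show ?thesis
      unfolding \<pi>_def \<rho>_def using order[OF i] by (intro le_of_imp_not_less) auto
  qed
  with strat show ?thesis
    unfolding nash_eq_def \<sigma>_def by blast
qed

lemma uniform_optimal_choice:
  assumes "\<And>i. i \<in> Pi \<Longrightarrow> uniform_optimal V owner E f P lt i"
  obtains tau tau' val where
    "\<forall>i\<in>Pi. \<forall>v\<in>V. owner v = i \<longrightarrow> (v, tau i v) \<in> E"
    "\<forall>i\<in>Pi. \<forall>v\<in>V. owner v \<noteq> i \<longrightarrow> (v, tau' i v) \<in> E"
    "\<forall>i\<in>Pi. \<forall>v\<in>V. \<forall>\<rho>\<in>plays_from V E v.
       consistent_pos (\<lambda>w. owner w = i) (tau i) \<rho> \<longrightarrow> le_of (lt i) (val i v) (f i \<rho>)"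
    "\<forall>i\<in>Pi. \<forall>v\<in>V. \<forall>\<rho>\<in>plays_from V E v.
       consistent_pos (\<lambda>w. owner w \<noteq> i) (tau' i) \<rho> \<longrightarrow> le_of (lt i) (f i \<rho>) (val i v)"
proof -
  define opt where "opt i = (\<lambda>(\<tau>, \<tau>', val).
     (\<forall>v\<in>V. owner v = i \<longrightarrow> (v, \<tau> v) \<in> E) \<and>
     (\<forall>v\<in>V. owner v \<noteq> i \<longrightarrow> (v, \<tau>' v) \<in> E) \<and>
     (\<forall>v\<in>V. val v \<in> P i
        \<and> (\<forall>\<rho>\<in>plays_from V E v. consistent_pos (\<lambda>w. owner w = i) \<tau> \<rho> \<longrightarrow> le_of (lt i) (val v) (f i \<rho>))
        \<and> (\<forall>\<rho>\<in>plays_from V E v. consistent_pos (\<lambda>w. owner w \<noteq> i) \<tau>' \<rho> \<longrightarrow> le_of (lt i) (f i \<rho>) (val v))))" for i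
  have "\<forall>i\<in>Pi. \<exists>t. opt i t"
    using assms unfolding uniform_optimal_def opt_def by fastforce
  then obtain t where "\<forall>i\<in>Pi. opt i (t i)"
    by (rule bchoice[THEN exE])
  then show thesis
    by (intro that[of "\<lambda>i. fst (t i)" "\<lambda>i. fst (snd (t i))" "\<lambda>i. snd (snd (t i))"])
      (auto simp: opt_def split_beta)
qed

theorem corollary1:
  fixes Pi :: "'p set" and V :: "'v set" and owner :: "'v \<Rightarrow> 'p" and E :: "('v \<times> 'v) set"
    and f :: "'p \<Rightarrow> (nat \<Rightarrow> 'v) \<Rightarrow> 'o" and P :: "'p \<Rightarrow> 'o set" and lt :: "'p \<Rightarrow> ('o \<times> 'o) set"
    and v0 :: 'v
  assumes ar: "arena Pi V owner E"
    and pay: "\<And>i \<rho>. i \<in> Pi \<Longrightarrow> is_play V E \<rho> \<Longrightarrow> f i \<rho> \<in> P i"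
    and ord: "\<And>i. i \<in> Pi \<Longrightarrow> strict_total_on (P i) (lt i)"
    and a: "\<And>i h \<rho> \<rho>'. i \<in> Pi \<Longrightarrow> is_hist V E h \<Longrightarrow>
              is_play V E (conc h \<rho>) \<Longrightarrow> is_play V E (conc h \<rho>') \<Longrightarrow>
              le_of (lt i) (f i \<rho>) (f i \<rho>') \<Longrightarrow> le_of (lt i) (f i (conc h \<rho>)) (f i (conc h \<rho>'))"
    and b: "\<And>i. i \<in> Pi \<Longrightarrow> uniform_optimal V owner E f P lt i"
    and v0: "v0 \<in> V"
  shows "\<exists>\<sigma>. (\<forall>i\<in>Pi. finite_memory V E owner i v0 (\<sigma> i)) \<and> nash_eq Pi V owner E f lt v0 \<sigma>"
proof -
  obtain tau tau' val where tau: "\<forall>i\<in>Pi. \<forall>v\<in>V. owner v = i \<longrightarrow> (v, tau i v) \<in> E"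
    and tau': "\<forall>i\<in>Pi. \<forall>v\<in>V. owner v \<noteq> i \<longrightarrow> (v, tau' i v) \<in> E"
    and opt_tau: "\<forall>i\<in>Pi. \<forall>v\<in>V. \<forall>\<rho>\<in>plays_from V E v.
       consistent_pos (\<lambda>w. owner w = i) (tau i) \<rho> \<longrightarrow> le_of (lt i) (val i v) (f i \<rho>)"
    and opt_tau': "\<forall>i\<in>Pi. \<forall>v\<in>V. \<forall>\<rho>\<in>plays_from V E v.
       consistent_pos (\<lambda>w. owner w \<noteq> i) (tau' i) \<rho> \<longrightarrow> le_of (lt i) (f i \<rho>) (val i v)"
    by (rule uniform_optimal_choice[OF b])
  have order: "irrefl (lt i) \<and> trans (lt i)" if "i \<in> Pi" for i
    using ord[OF that] by (simp add: strict_total_on_def irrefl_def)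
  have "finite V" using ar by (simp add: arena_def)
  then have "\<forall>i\<in>Pi. finite_memory V E owner i v0 (punish_profile tau tau' owner i)"
    by (blast intro: punish_profile_finite_memory)
  moreover have "nash_eq Pi V owner E f lt v0 (punish_profile tau tau' owner)"
    by (rule punish_profile_nash_eq[OF ar order a tau tau' opt_tau opt_tau' v0])
  ultimately show ?thesis by blast
qed

end
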